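(* Let $Q(t)=(1+t)^{-\lambda}\theta(t)^{n\gamma-n+2}-(1+t)$ for $t\ge0$. Then $|Q(t)|\le C\ln(1+t)$ if $\lambda=0$ and $|Q(t)|\le C(1+t)^{\lambda}$ if $0<\lambda<1$; moreover for every integer $h\ge1$, $\big|\frac{d^hQ}{dt^h}(t)\big|\le C(h)(1+t)^{\lambda-h}$ for all $t\ge0$, where the constants depend only on $n,\gamma,\lambda$ (and $h$).
   Context: Fix $n\in\{2,3\}$, $\gamma>1$, $\lambda\in[0,1)$, $\kappa=\frac{1+\lambda}{n\gamma-n+2}$, $\nu(t)=(1+t)^\kappa$. Let $h$ solve $h_{tt}+(1+t)^{-\lambda}h_t-\kappa(\nu+h)^{n-n\gamma-1}=-\nu_{tt}-(1+t)^{-\lambda}\nu_t$ for $t>0$, $h(0)=h_t(0)=0$, and set $\theta=\nu+h$. *)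

theory Defs
  imports "HOL-Analysis.Analysis"
begin

definition kappa :: "nat \<Rightarrow> real \<Rightarrow> real \<Rightarrow> real" where
  "kappa n gam lam = (1 + lam) / (real n * gam - real n + 2)"

definition nu :: "nat \<Rightarrow> real \<Rightarrow> real \<Rightarrow> real \<Rightarrow> real" where
  "nu n gam lam t = (1 + t) powr kappa n gam lam"

end

theory Submission
  imports Defs "HOL-Real_Asymp.Real_Asymp"
begin

text \<open>
  With \<open>\<theta> = \<nu> + h\<close> and \<open>p = n\<gamma> - n + 2\<close> the equation for \<open>h\<close> reads
  \<open>\<theta>'' + (1 + t)\<^sup>-\<^sup>\<lambda> \<theta>' = \<kappa> \<theta>\<^sup>1\<^sup>-\<^sup>p\<close> with \<open>\<kappa> p = 1 + \<lambda>\<close>, and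
  \<open>Q = (1 + t)\<^sup>-\<^sup>\<lambda> (\<theta>\<^sup>p - (1 + t)\<^sup>1\<^sup>+\<^sup>\<lambda>)\<close>.

  Everything rests on the linear equation \<open>Z' = -(1 + t)\<^sup>-\<^sup>\<lambda> Z + F\<close>: comparing with the
  supersolution \<open>K (1 + t)\<^sup>m\<^sup>+\<^sup>\<lambda>\<close> shows that a forcing \<open>F\<close> of order \<open>(1 + t)\<^sup>m\<close> produces
  a solution of order \<open>(1 + t)\<^sup>m\<^sup>+\<^sup>\<lambda>\<close>, and differentiating the equation propagates this to
  all derivatives, i.e. to the symbol classes \<open>S\<^sup>m\<close>.

  For the nonlinear equation, \<open>\<theta>' e\<^sup>A\<close> (with \<open>A' = (1 + t)\<^sup>-\<^sup>\<lambda>\<close>) is nondecreasing, so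
  \<open>\<theta>' > 0\<close> for \<open>t \<ge> 1\<close>, and then \<open>P = (1 + t)\<^sup>-\<^sup>\<lambda> (\<theta>\<^sup>p)'\<close> is bounded below, which gives
  \<open>\<theta> \<ge> c (1 + t)\<^sup>\<kappa>\<close>. Hence the forcing \<open>\<kappa> \<theta>\<^sup>1\<^sup>-\<^sup>p\<close> of the equation for \<open>\<theta>'\<close> is
  controlled by \<open>\<theta>\<close>, and bootstrapping yields \<open>\<theta> \<in> S\<^sup>\<kappa>\<close>. The deviation
  \<open>e = \<theta>' - \<kappa> \<theta>\<^sup>1\<^sup>-\<^sup>p (1 + t)\<^sup>\<lambda>\<close> solves the same linear equation with forcing in
  \<open>S\<^sup>\<kappa>\<^sup>-\<^sup>2\<close>, so \<open>e \<in> S\<^sup>\<kappa>\<^sup>+\<^sup>\<lambda>\<^sup>-\<^sup>2\<close> and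
  \<open>(\<theta>\<^sup>p - (1 + t)\<^sup>1\<^sup>+\<^sup>\<lambda>)' = p \<theta>\<^sup>p\<^sup>-\<^sup>1 e \<in> S\<^sup>2\<^sup>\<lambda>\<^sup>-\<^sup>1\<close>. Integrating gives the
  logarithmic (\<open>\<lambda> = 0\<close>) or power (\<open>\<lambda> > 0\<close>) bound on \<open>Q\<close>, and the symbol calculus gives the
  bounds on its derivatives.
\<close>

section \<open>Symbol classes on the half-line\<close>

text \<open>Differentiability is built into the class, so the symbol calculus needs
  no separate smoothness hypotheses.\<close>

fun symbol_upto :: "nat \<Rightarrow> real \<Rightarrow> (real \<Rightarrow> real) \<Rightarrow> bool" where
  "symbol_upto 0 m f \<longleftrightarrow>
     (\<forall>t>0. f differentiable at t) \<and> (\<exists>C. \<forall>t>0. \<bar>f t\<bar> \<le> C * (1 + t) powr m)"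
| "symbol_upto (Suc k) m f \<longleftrightarrow> symbol_upto 0 m f \<and> symbol_upto k (m - 1) (deriv f)"

definition symbol :: "real \<Rightarrow> (real \<Rightarrow> real) \<Rightarrow> bool" where
  "symbol m f \<longleftrightarrow> (\<forall>k. symbol_upto k m f)"

lemma eventually_eq_on_pos:
  fixes f g :: "real \<Rightarrow> 'a"
  assumes "\<And>t. t > 0 \<Longrightarrow> f t = g t" "t > 0"
  shows "eventually (\<lambda>s. f s = g s) (nhds t)"
proof -
  have "eventually (\<lambda>s. s \<in> {0<..}) (nhds t)"
    using assms(2) by (intro eventually_nhds_in_open) auto
  then show ?thesis
    by eventually_elim (use assms(1) in auto)
qed

lemma symbol_upto_has_derivative:
  "symbol_upto k m f \<Longrightarrow> t > 0 \<Longrightarrow> (f has_real_derivative deriv f t) (at t)"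
  by (cases k) (auto simp: DERIV_deriv_iff_real_differentiable)

lemma symbol_upto_bound: "symbol_upto k m f \<Longrightarrow> \<exists>C. \<forall>t>0. \<bar>f t\<bar> \<le> C * (1 + t) powr m"
  by (cases k) auto

lemma symbol_upto_mono: "symbol_upto k m f \<Longrightarrow> j \<le> k \<Longrightarrow> symbol_upto j m f"
proof (induction k arbitrary: j m f)
  case (Suc k)
  then show ?case by (cases j) auto
qed simp

lemma symbol_upto_SucD: "symbol_upto (Suc k) m f \<Longrightarrow> symbol_upto k m f"
  by (erule symbol_upto_mono) simp

lemma symbol_iff: "symbol m f \<longleftrightarrow> symbol_upto 0 m f \<and> symbol (m - 1) (deriv f)"
proof
  assume "symbol m f"
  then show "symbol_upto 0 m f \<and> symbol (m - 1) (deriv f)"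
    unfolding symbol_def using symbol_upto.simps(2) by blast
next
  assume *: "symbol_upto 0 m f \<and> symbol (m - 1) (deriv f)"
  show "symbol m f"
    unfolding symbol_def
  proof
    show "symbol_upto k m f" for k
      using * unfolding symbol_def by (cases k) auto
  qed
qed

lemma symbol_upto_deriv_bound:
  "symbol_upto k m f \<Longrightarrow> \<exists>C. \<forall>t>0. \<bar>(deriv ^^ k) f t\<bar> \<le> C * (1 + t) powr (m - real k)"
proof (induction k arbitrary: m f)
  case (Suc k)
  then have "symbol_upto k (m - 1) (deriv f)" by simp
  then obtain C where "\<forall>t>0. \<bar>(deriv ^^ k) (deriv f) t\<bar> \<le> C * (1 + t) powr (m - 1 - real k)"
    using Suc.IH by blast
  then show ?case
    by (intro exI[of _ C]) (simp add: funpow_Suc_right algebra_simps del: funpow.simps)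
qed (auto dest: symbol_upto_bound)

lemma bound_coeff_nonneg:
  fixes f :: "real \<Rightarrow> real"
  assumes "\<forall>t>0. \<bar>f t\<bar> \<le> C * (1 + t) powr m"
  shows "C \<ge> 0"
proof -
  have "\<bar>f 1\<bar> \<le> C * 2 powr m"
    using assms[rule_format, of 1] by simp
  then have "0 \<le> C * 2 powr m"
    by (meson abs_ge_zero order_trans)
  then show ?thesis by (simp add: zero_le_mult_iff)
qed

lemma symbol_upto_cong:
  assumes "\<And>t. t > 0 \<Longrightarrow> f t = g t" "symbol_upto k m f"
  shows "symbol_upto k m g"
  using assms
proof (induction k arbitrary: m f g)
  case 0
  have "g differentiable at t" if "t > 0" for t
    using has_field_derivative_transform_within_open[OF
        symbol_upto_has_derivative[OF 0(2) that] open_greaterThan, of 0 g] 0(1) that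
    by (auto simp: real_differentiable_def)
  with 0 show ?case by auto
next
  case (Suc k)
  have "deriv f t = deriv g t" if "t > 0" for t
    using deriv_cong_ev[OF eventually_eq_on_pos[OF Suc.prems(1) that] refl] .
  moreover have "symbol_upto k (m - 1) (deriv f)"
    using Suc.prems(2) by simp
  ultimately have "symbol_upto k (m - 1) (deriv g)"
    by (rule Suc.IH)
  moreover have "symbol_upto 0 m g"
    using Suc.IH[OF Suc.prems(1) symbol_upto_SucD[OF Suc.prems(2)]] symbol_upto_mono by blast
  ultimately show ?case
    by simp
qed

lemma symbol_upto_add:
  "symbol_upto k m f \<Longrightarrow> symbol_upto k m g \<Longrightarrow> symbol_upto k m (\<lambda>t. f t + g t)"
proof (induction k arbitrary: m f g)
  case 0
  then obtain C D where "\<forall>t>0. \<bar>f t\<bar> \<le> C * (1 + t) powr m" "\<forall>t>0. \<bar>g t\<bar> \<le> D * (1 + t) powr m"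
    by auto
  then have "\<forall>t>0. \<bar>f t + g t\<bar> \<le> (C + D) * (1 + t) powr m"
    by (auto simp: distrib_right intro: abs_triangle_ineq[THEN order_trans] add_mono)
  with 0 show ?case by (auto intro: differentiable_add)
next
  case (Suc k)
  have "deriv (\<lambda>t. f t + g t) t = deriv f t + deriv g t" if "t > 0" for t
    using symbol_upto_has_derivative[OF Suc.prems(1) that] symbol_upto_has_derivative[OF Suc.prems(2) that]
    by (auto intro!: DERIV_imp_deriv derivative_eq_intros)
  moreover have "symbol_upto k (m - 1) (\<lambda>t. deriv f t + deriv g t)"
    using Suc by simp
  ultimately have "symbol_upto k (m - 1) (deriv (\<lambda>t. f t + g t))"
    by (auto intro: symbol_upto_cong[rotated])
  moreover have "symbol_upto 0 m (\<lambda>t. f t + g t)"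
    using Suc.IH[OF symbol_upto_SucD symbol_upto_SucD] Suc.prems symbol_upto_mono by blast
  ultimately show ?case by simp
qed

lemma symbol_upto_cmult: "symbol_upto k m f \<Longrightarrow> symbol_upto k m (\<lambda>t. c * f t)"
proof (induction k arbitrary: m f)
  case 0
  then obtain C where "\<forall>t>0. \<bar>f t\<bar> \<le> C * (1 + t) powr m" by auto
  then have "\<forall>t>0. \<bar>c * f t\<bar> \<le> (\<bar>c\<bar> * C) * (1 + t) powr m"
    by (auto simp: abs_mult mult.assoc intro: mult_left_mono)
  with 0 show ?case by auto
next
  case (Suc k)
  have "deriv (\<lambda>t. c * f t) t = c * deriv f t" if "t > 0" for t
    using symbol_upto_has_derivative[OF Suc.prems that] by (auto intro!: DERIV_imp_deriv derivative_eq_intros)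
  moreover have "symbol_upto k (m - 1) (\<lambda>t. c * deriv f t)"
    using Suc by simp
  ultimately have "symbol_upto k (m - 1) (deriv (\<lambda>t. c * f t))"
    by (auto intro: symbol_upto_cong[rotated])
  moreover have "symbol_upto 0 m (\<lambda>t. c * f t)"
    using Suc.IH[OF symbol_upto_SucD] Suc.prems symbol_upto_mono by blast
  ultimately show ?case by simp
qed

lemma symbol_upto_mult:
  "symbol_upto k m f \<Longrightarrow> symbol_upto k q g \<Longrightarrow> symbol_upto k (m + q) (\<lambda>t. f t * g t)"
proof (induction k arbitrary: m q f g)
  case 0
  then obtain C D where C: "\<forall>t>0. \<bar>f t\<bar> \<le> C * (1 + t) powr m"
    and D: "\<forall>t>0. \<bar>g t\<bar> \<le> D * (1 + t) powr q"
    by auto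
  have "\<bar>f t * g t\<bar> \<le> (C * D) * (1 + t) powr (m + q)" if "t > 0" for t
  proof -
    have "\<bar>f t * g t\<bar> \<le> (C * (1 + t) powr m) * (D * (1 + t) powr q)"
      unfolding abs_mult using C D bound_coeff_nonneg[OF D] that by (intro mult_mono) auto
    then show ?thesis by (simp add: powr_add algebra_simps)
  qed
  with 0 show ?case by (auto intro: differentiable_mult)
next
  case (Suc k)
  have "deriv (\<lambda>t. f t * g t) t = deriv f t * g t + f t * deriv g t" if "t > 0" for t
    using symbol_upto_has_derivative[OF Suc.prems(1) that] symbol_upto_has_derivative[OF Suc.prems(2) that]
    by (auto intro!: DERIV_imp_deriv derivative_eq_intros)
  moreover have "symbol_upto k (m + q - 1) (\<lambda>t. deriv f t * g t + f t * deriv g t)"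
    using Suc.IH[of "m - 1" "deriv f" q g] Suc.IH[of m f "q - 1" "deriv g"] Suc.prems
      symbol_upto_mono[of "Suc k" _ _ k]
    by (intro symbol_upto_add) (auto simp: algebra_simps)
  ultimately have "symbol_upto k (m + q - 1) (deriv (\<lambda>t. f t * g t))"
    by (auto intro: symbol_upto_cong[rotated])
  moreover have "symbol_upto 0 (m + q) (\<lambda>t. f t * g t)"
    using Suc.IH[OF symbol_upto_SucD symbol_upto_SucD] Suc.prems symbol_upto_mono by blast
  ultimately show ?case by simp
qed

lemma powr_le_of_lower_bound:
  fixes x c m r :: real
  assumes "c > 0" "x > -1" "c * (1 + x) powr m \<le> y" "r \<le> 0"
  shows "y powr r \<le> c powr r * (1 + x) powr (m * r)"
proof -
  have "y powr r \<le> (c * (1 + x) powr m) powr r"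
    using assms by (intro powr_mono2') auto
  then show ?thesis
    using assms by (simp add: powr_mult powr_powr)
qed

lemma pos_of_powr_lower_bound:
  fixes c t y :: real
  assumes "c > 0" "t > -1" "c * (1 + t) powr m \<le> y"
  shows "y > 0"
proof -
  have "0 < c * (1 + t) powr m"
    using assms(1,2) by simp
  then show ?thesis
    using assms(3) by linarith
qed

lemma symbol_upto_0_powr:
  assumes "symbol_upto 0 m f" "c > 0" "\<And>t. t > 0 \<Longrightarrow> c * (1 + t) powr m \<le> f t"
  shows "symbol_upto 0 (m * r) (\<lambda>t. f t powr r)"
proof -
  obtain C where C: "\<forall>t>0. \<bar>f t\<bar> \<le> C * (1 + t) powr m"
    using assms(1) by auto
  have pos: "f t > 0" if "t > 0" for t
    using pos_of_powr_lower_bound[OF assms(2) _ assms(3)[OF that]] that by simp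
  define C' where "C' = (if r \<ge> 0 then C powr r else c powr r)"
  have "f t powr r \<le> C' * (1 + t) powr (m * r)" if t: "t > 0" for t
  proof (cases "r \<ge> 0")
    case True
    have "f t powr r \<le> (C * (1 + t) powr m) powr r"
      using C t pos[OF t] True by (intro powr_mono2) auto
    then show ?thesis
      using bound_coeff_nonneg[OF C] t True by (simp add: C'_def powr_mult powr_powr)
  next
    case False
    then show ?thesis
      using powr_le_of_lower_bound[OF assms(2) _ assms(3)[OF t]] t by (simp add: C'_def)
  qed
  moreover have "(\<lambda>t. f t powr r) differentiable at t" if "t > 0" for t
    using DERIV_fun_powr[OF symbol_upto_has_derivative[OF assms(1) that] pos[OF that]]
    by (auto simp: real_differentiable_def)
  ultimately show ?thesis
    by auto
qed

lemma symbol_upto_powr: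
  assumes "symbol_upto k m f" "c > 0" "\<And>t. t > 0 \<Longrightarrow> c * (1 + t) powr m \<le> f t"
  shows "symbol_upto k (m * r) (\<lambda>t. f t powr r)"
  using assms(1)
proof (induction k arbitrary: r)
  case 0
  then show ?case
    using assms(2,3) by (rule symbol_upto_0_powr)
next
  case (Suc k)
  have "symbol_upto k (m * (r - 1) + (m - 1)) (\<lambda>t. f t powr (r - 1) * deriv f t)"
  proof (rule symbol_upto_mult)
    show "symbol_upto k (m * (r - 1)) (\<lambda>t. f t powr (r - 1))"
      by (rule Suc.IH[OF symbol_upto_SucD[OF Suc.prems]])
    show "symbol_upto k (m - 1) (deriv f)"
      using Suc.prems by simp
  qed
  then have "symbol_upto k (m * (r - 1) + (m - 1)) (\<lambda>t. r * (f t powr (r - 1) * deriv f t))"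
    by (rule symbol_upto_cmult)
  moreover have "m * (r - 1) + (m - 1) = m * r - 1"
    by (simp add: algebra_simps)
  ultimately have "symbol_upto k (m * r - 1) (\<lambda>t. r * (f t powr (r - 1) * deriv f t))"
    by simp
  moreover have "r * (f t powr (r - 1) * deriv f t) = deriv (\<lambda>t. f t powr r) t" if "t > 0" for t
  proof -
    have "f t > 0"
      using pos_of_powr_lower_bound[OF assms(2) _ assms(3)[OF that]] that by simp
    from DERIV_fun_powr[OF symbol_upto_has_derivative[OF Suc.prems that] this]
    show ?thesis
      by (intro DERIV_imp_deriv[symmetric]) (simp add: mult.assoc)
  qed
  ultimately have "symbol_upto k (m * r - 1) (deriv (\<lambda>t. f t powr r))"
    by (rule symbol_upto_cong[rotated])
  moreover have "symbol_upto 0 (m * r) (\<lambda>t. f t powr r)"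
    using Suc.IH[OF symbol_upto_SucD[OF Suc.prems]] symbol_upto_mono by blast
  ultimately show ?case by simp
qed

lemma symbol_upto_shifted_powr: "symbol_upto k s (\<lambda>t. (1 + t) powr s)"
proof (induction k arbitrary: s)
  case 0
  have "(\<lambda>t. (1 + t) powr s) differentiable at t" if "t > 0" for t :: real
    using that by (auto intro!: derivative_eq_intros simp: real_differentiable_def)
  then show ?case by (auto intro!: exI[of _ 1])
next
  case (Suc k)
  have "deriv (\<lambda>t. (1 + t) powr s) t = s * (1 + t) powr (s - 1)" if "t > 0" for t :: real
    using that by (intro DERIV_imp_deriv) (auto intro!: derivative_eq_intros)
  moreover have "symbol_upto k (s - 1) (\<lambda>t. s * (1 + t) powr (s - 1))"
    by (rule symbol_upto_cmult[OF Suc.IH])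
  ultimately have "symbol_upto k (s - 1) (deriv (\<lambda>t. (1 + t) powr s))"
    by (auto intro: symbol_upto_cong[rotated])
  moreover have "symbol_upto 0 s (\<lambda>t. (1 + t) powr s)"
    by (rule symbol_upto_mono[OF Suc.IH]) simp
  ultimately show ?case by simp
qed

lemma symbol_deriv: "symbol m f \<Longrightarrow> symbol (m - 1) (deriv f)"
  using symbol_iff by blast

lemma symbol_has_derivative: "symbol m f \<Longrightarrow> t > 0 \<Longrightarrow> (f has_real_derivative deriv f t) (at t)"
  unfolding symbol_def using symbol_upto_has_derivative by blast

lemma symbol_cong: "(\<And>t. t > 0 \<Longrightarrow> f t = g t) \<Longrightarrow> symbol m f \<Longrightarrow> symbol m g"
  unfolding symbol_def using symbol_upto_cong by blast

lemma symbol_cmult: "symbol m f \<Longrightarrow> symbol m (\<lambda>t. c * f t)"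
  unfolding symbol_def using symbol_upto_cmult by blast

lemma symbol_mult: "symbol m f \<Longrightarrow> symbol q g \<Longrightarrow> symbol (m + q) (\<lambda>t. f t * g t)"
  unfolding symbol_def using symbol_upto_mult by blast

lemma symbol_powr:
  "symbol m f \<Longrightarrow> c > 0 \<Longrightarrow> (\<And>t. t > 0 \<Longrightarrow> c * (1 + t) powr m \<le> f t)
    \<Longrightarrow> symbol (m * r) (\<lambda>t. f t powr r)"
  unfolding symbol_def using symbol_upto_powr by blast

lemma symbol_shifted_powr: "symbol s (\<lambda>t. (1 + t) powr s)"
  unfolding symbol_def using symbol_upto_shifted_powr by blast

section \<open>Linear equations with damping \<open>(1 + t)\<^sup>-\<^sup>\<lambda>\<close>\<close>

lemma shifted_powr_le_abs:
  fixes t T r :: real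
  assumes "0 \<le> t" "t \<le> T"
  shows "(1 + t) powr r \<le> (1 + T) powr \<bar>r\<bar>"
proof (cases "r \<ge> 0")
  case True
  then show ?thesis using assms by (simp add: powr_mono2)
next
  case False
  then have "(1 + t) powr r \<le> (1 + t) powr 0"
    using assms by (intro powr_mono) auto
  then have "(1 + t) powr r \<le> 1"
    using assms by simp
  also have "1 \<le> (1 + T) powr \<bar>r\<bar>" using assms by (intro ge_one_powr_ge_zero) auto
  finally show ?thesis .
qed

definition damping_primitive :: "real \<Rightarrow> real \<Rightarrow> real"
  where "damping_primitive lam t = (1 + t) powr (1 - lam) / (1 - lam)"

lemma damping_primitive_has_derivative:
  "lam < 1 \<Longrightarrow> t > -1 \<Longrightarrow> (damping_primitive lam has_real_derivative (1 + t) powr (- lam)) (at t)"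
  unfolding damping_primitive_def[abs_def] by (auto intro!: derivative_eq_intros)

lemma damping_primitive_nonneg: "lam < 1 \<Longrightarrow> 0 \<le> damping_primitive lam t"
  unfolding damping_primitive_def by simp

lemma damping_primitive_mono:
  "lam < 1 \<Longrightarrow> 0 \<le> s \<Longrightarrow> s \<le> t \<Longrightarrow> damping_primitive lam s \<le> damping_primitive lam t"
  unfolding damping_primitive_def by (intro divide_right_mono powr_mono2) auto

lemma integrating_factor_mono:
  fixes u B :: "real \<Rightarrow> real"
  assumes "x \<le> y"
    and u: "\<And>s. x \<le> s \<Longrightarrow> s \<le> y \<Longrightarrow> (u has_real_derivative u' s) (at s)"
    and B: "\<And>s. x \<le> s \<Longrightarrow> s \<le> y \<Longrightarrow> (B has_real_derivative b s) (at s)"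
    and ineq: "\<And>s. x \<le> s \<Longrightarrow> s \<le> y \<Longrightarrow> 0 \<le> u' s + b s * u s"
  shows "exp (B x) * u x \<le> exp (B y) * u y"
proof (rule DERIV_nonneg_imp_nondecreasing[OF \<open>x \<le> y\<close>])
  fix s assume s: "x \<le> s" "s \<le> y"
  have "((\<lambda>s. exp (B s) * u s) has_real_derivative exp (B s) * (u' s + b s * u s)) (at s)"
    using u[OF s] B[OF s] by (auto intro!: derivative_eq_intros simp: algebra_simps)
  moreover have "0 \<le> exp (B s) * (u' s + b s * u s)"
    using ineq[OF s] by simp
  ultimately show "\<exists>d. ((\<lambda>s. exp (B s) * u s) has_real_derivative d) (at s) \<and> 0 \<le> d"
    by blast
qed

lemma abs_increment_le:
  fixes f g :: "real \<Rightarrow> real"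
  assumes "a \<le> b" "continuous_on {a..b} f" "continuous_on {a..b} g"
    and f: "\<And>s. a < s \<Longrightarrow> s < b \<Longrightarrow> (f has_real_derivative f' s) (at s)"
    and g: "\<And>s. a < s \<Longrightarrow> s < b \<Longrightarrow> (g has_real_derivative g' s) (at s)"
    and le: "\<And>s. a < s \<Longrightarrow> s < b \<Longrightarrow> \<bar>f' s\<bar> \<le> g' s"
  shows "\<bar>f b - f a\<bar> \<le> g b - g a"
proof -
  have "(g a - c * f a) \<le> (g b - c * f b)" if c: "\<bar>c\<bar> = 1" for c
  proof (rule DERIV_nonneg_imp_increasing_open[OF \<open>a \<le> b\<close>])
    fix s assume s: "a < s" "s < b"
    have "((\<lambda>s. g s - c * f s) has_real_derivative g' s - c * f' s) (at s)"
      using f[OF s] g[OF s] by (auto intro!: derivative_eq_intros)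
    moreover have "0 \<le> g' s - c * f' s"
      using le[OF s] c by (cases "c = 1") (auto simp: abs_if split: if_splits)
    ultimately show "\<exists>y. ((\<lambda>s. g s - c * f s) has_real_derivative y) (at s) \<and> 0 \<le> y"
      by blast
  qed (intro continuous_on_diff continuous_on_mult continuous_on_const assms(2,3))
  from this[of 1] this[of "-1"] show ?thesis by (simp add: abs_le_iff)
qed

lemma damped_linear_ode_backward_bound:
  fixes Y G :: "real \<Rightarrow> real"
  assumes "lam < 1" "0 < t" "t \<le> T" "L \<ge> 0"
    and Y: "\<And>s. t \<le> s \<Longrightarrow> s \<le> T \<Longrightarrow> (Y has_real_derivative - ((1 + s) powr (- lam)) * Y s + G s) (at s)"
    and G: "\<And>s. t \<le> s \<Longrightarrow> s \<le> T \<Longrightarrow> \<bar>G s\<bar> \<le> (1 + s) powr (- lam) * L"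
  shows "Y t \<le> exp (damping_primitive lam T) * (L + \<bar>Y T\<bar>)"
proof -
  let ?A = "damping_primitive lam"
  have "exp (?A t) * (L + Y t) \<le> exp (?A T) * (L + Y T)"
  proof (rule integrating_factor_mono[OF \<open>t \<le> T\<close>, where u = "\<lambda>s. L + Y s" and B = ?A])
    fix s assume s: "t \<le> s" "s \<le> T"
    show "((\<lambda>s. L + Y s) has_real_derivative - ((1 + s) powr (- lam)) * Y s + G s) (at s)"
      using Y[OF s] by (auto intro!: derivative_eq_intros)
    show "(?A has_real_derivative (1 + s) powr (- lam)) (at s)"
      using s assms(1,2) by (intro damping_primitive_has_derivative) auto
    show "0 \<le> - ((1 + s) powr (- lam)) * Y s + G s + (1 + s) powr (- lam) * (L + Y s)"
      using G[OF s] by (simp add: algebra_simps abs_le_iff)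
  qed
  also have "\<dots> \<le> exp (?A T) * (L + \<bar>Y T\<bar>)"
    by (intro mult_left_mono) auto
  finally have bound: "exp (?A t) * (L + Y t) \<le> exp (?A T) * (L + \<bar>Y T\<bar>)" .
  show ?thesis
  proof (cases "L + Y t \<le> 0")
    case True
    moreover have "0 \<le> exp (?A T) * (L + \<bar>Y T\<bar>)"
      using \<open>L \<ge> 0\<close> by simp
    ultimately show ?thesis
      using \<open>L \<ge> 0\<close> by linarith
  next
    case False
    have "1 \<le> exp (?A t)"
      using damping_primitive_nonneg[OF assms(1)] by simp
    from mult_right_mono[OF this, of "L + Y t"] False
    have "L + Y t \<le> exp (?A t) * (L + Y t)" by simp
    then show ?thesis
      using bound \<open>L \<ge> 0\<close> by linarith
  qed
qed

lemma damped_linear_ode_supersolution: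
  fixes Y G \<phi> \<phi>' :: "real \<Rightarrow> real"
  assumes "lam < 1" "0 < T" "T \<le> t"
    and Y: "\<And>s. T \<le> s \<Longrightarrow> s \<le> t \<Longrightarrow> (Y has_real_derivative - ((1 + s) powr (- lam)) * Y s + G s) (at s)"
    and \<phi>: "\<And>s. T \<le> s \<Longrightarrow> s \<le> t \<Longrightarrow> (\<phi> has_real_derivative \<phi>' s) (at s)"
    and super: "\<And>s. T \<le> s \<Longrightarrow> s \<le> t \<Longrightarrow> G s \<le> \<phi>' s + (1 + s) powr (- lam) * \<phi> s"
    and "Y T \<le> \<phi> T"
  shows "Y t \<le> \<phi> t"
proof -
  let ?A = "damping_primitive lam"
  have "exp (?A T) * (\<phi> T - Y T) \<le> exp (?A t) * (\<phi> t - Y t)"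
  proof (rule integrating_factor_mono[OF \<open>T \<le> t\<close>, where u = "\<lambda>s. \<phi> s - Y s" and B = ?A])
    fix s assume s: "T \<le> s" "s \<le> t"
    show "((\<lambda>s. \<phi> s - Y s) has_real_derivative \<phi>' s - (- ((1 + s) powr (- lam)) * Y s + G s)) (at s)"
      using \<phi>[OF s] Y[OF s] by (rule DERIV_diff)
    show "(?A has_real_derivative (1 + s) powr (- lam)) (at s)"
      using s assms(1,2) by (intro damping_primitive_has_derivative) auto
    show "0 \<le> \<phi>' s - (- ((1 + s) powr (- lam)) * Y s + G s) + (1 + s) powr (- lam) * (\<phi> s - Y s)"
      using super[OF s] by (simp add: algebra_simps)
  qed
  moreover have "0 \<le> exp (?A T) * (\<phi> T - Y T)"
    using \<open>Y T \<le> \<phi> T\<close> by simp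
  ultimately have "0 \<le> exp (?A t) * (\<phi> t - Y t)"
    by linarith
  then show ?thesis
    by (simp add: zero_le_mult_iff)
qed

lemma linear_ode_bounded_before:
  fixes Y G :: "real \<Rightarrow> real"
  assumes lam: "0 \<le> lam" "lam < 1"
    and Y: "\<And>t. t > 0 \<Longrightarrow> (Y has_real_derivative - ((1 + t) powr (- lam)) * Y t + G t) (at t)"
    and G: "\<And>t. t > 0 \<Longrightarrow> \<bar>G t\<bar> \<le> C * (1 + t) powr r"
  shows "\<exists>B. \<forall>t. 0 < t \<longrightarrow> t \<le> T \<longrightarrow> Y t \<le> B"
proof -
  have "C \<ge> 0"
    using G by (intro bound_coeff_nonneg[of G _ r]) auto
  define L where "L = (1 + T) powr lam * (C * (1 + T) powr \<bar>r\<bar>)"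
  have "L \<ge> 0" unfolding L_def using \<open>C \<ge> 0\<close> by simp
  have "\<bar>G s\<bar> \<le> (1 + s) powr (- lam) * L" if s: "0 < s" "s \<le> T" for s
  proof -
    have "\<bar>G s\<bar> \<le> C * (1 + T) powr \<bar>r\<bar>"
      using s by (intro order_trans[OF G mult_left_mono[OF shifted_powr_le_abs]] \<open>C \<ge> 0\<close>) auto
    moreover have "1 \<le> (1 + s) powr (- lam) * (1 + T) powr lam"
    proof -
      have "(1 + s) powr lam \<le> (1 + T) powr lam"
        using s lam by (intro powr_mono2) auto
      then show ?thesis
        using s by (simp add: powr_minus divide_simps)
    qed
    from mult_right_mono[OF this, of "C * (1 + T) powr \<bar>r\<bar>"]
    have "C * (1 + T) powr \<bar>r\<bar> \<le> (1 + s) powr (- lam) * L"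
      unfolding L_def using \<open>C \<ge> 0\<close> by (simp add: mult.assoc)
    ultimately show ?thesis
      by linarith
  qed
  then have "Y t \<le> exp (damping_primitive lam T) * (L + \<bar>Y T\<bar>)" if "0 < t" "t \<le> T" for t
    using that \<open>L \<ge> 0\<close> lam by (intro damped_linear_ode_backward_bound[where G = G] Y) auto
  then show ?thesis
    by blast
qed

lemma shifted_powr_supersolution_ineq:
  fixes x r lam C K g :: real
  assumes "x > 0" "0 \<le> C" "2 * C \<le> K" "g \<le> C * (1 + x) powr r"
    and small: "\<bar>r + lam\<bar> * (1 + x) powr (lam - 1) \<le> 1 / 2"
  shows "g \<le> K * ((r + lam) * (1 + x) powr (r + lam - 1))
    + (1 + x) powr (- lam) * (K * (1 + x) powr (r + lam))"
proof -
  define P where "P = (1 + x) powr r"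
  define q where "q = (1 + x) powr (lam - 1)"
  have "(1 + x) powr (- lam) * (1 + x) powr (r + lam) = P" "(1 + x) powr (r + lam - 1) = P * q"
    using \<open>x > 0\<close> by (simp_all add: P_def q_def add_diff_eq flip: powr_add)
  then have "K * ((r + lam) * (1 + x) powr (r + lam - 1)) + (1 + x) powr (- lam) * (K * (1 + x) powr (r + lam))
      = K * P * (1 / 2 + (r + lam) * q) + K / 2 * P"
    by (simp add: algebra_simps)
  moreover have "0 \<le> K * P * (1 / 2 + (r + lam) * q)"
  proof -
    have "- ((r + lam) * q) \<le> \<bar>r + lam\<bar> * q"
      unfolding q_def minus_mult_left by (intro mult_right_mono) auto
    then have "0 \<le> 1 / 2 + (r + lam) * q"
      using small unfolding q_def by linarith
    then show ?thesis
      using assms(2,3) unfolding P_def by simp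
  qed
  moreover have "C * P \<le> K / 2 * P"
    using assms(3) unfolding P_def by (intro mult_right_mono) auto
  ultimately show ?thesis
    using assms(4) unfolding P_def by linarith
qed

lemma linear_ode_eventual_growth:
  fixes Y G :: "real \<Rightarrow> real"
  assumes lam: "0 \<le> lam" "lam < 1" and "T > 0"
    and Y: "\<And>t. t > 0 \<Longrightarrow> (Y has_real_derivative - ((1 + t) powr (- lam)) * Y t + G t) (at t)"
    and G: "\<And>t. t > 0 \<Longrightarrow> \<bar>G t\<bar> \<le> C * (1 + t) powr r"
    and small: "\<And>t. t \<ge> T \<Longrightarrow> \<bar>r + lam\<bar> * (1 + t) powr (lam - 1) \<le> 1 / 2"
  shows "\<exists>K. \<forall>t\<ge>T. Y t \<le> K * (1 + t) powr (r + lam)"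
proof -
  define s where "s = r + lam"
  have "C \<ge> 0"
    using G by (intro bound_coeff_nonneg[of G _ r]) auto
  define K where "K = max (2 * C) (\<bar>Y T\<bar> * (1 + T) powr (- s))"
  have "\<bar>Y T\<bar> = \<bar>Y T\<bar> * (1 + T) powr (- s) * (1 + T) powr s"
    using \<open>T > 0\<close> by (simp add: mult.assoc flip: powr_add)
  also have "\<dots> \<le> K * (1 + T) powr s"
    unfolding K_def by (intro mult_right_mono) auto
  finally have start: "Y T \<le> K * (1 + T) powr s"
    by simp
  have "Y t \<le> K * (1 + t) powr s" if "T \<le> t" for t
  proof (rule damped_linear_ode_supersolution[OF lam(2) \<open>T > 0\<close> that, where G = G
        and \<phi> = "\<lambda>x. K * (1 + x) powr s" and \<phi>' = "\<lambda>x. K * (s * (1 + x) powr (s - 1))"])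
    fix x assume x: "T \<le> x" "x \<le> t"
    then have "x > 0" using \<open>T > 0\<close> by simp
    then show "(Y has_real_derivative - ((1 + x) powr (- lam)) * Y x + G x) (at x)"
      by (rule Y)
    show "((\<lambda>x. K * (1 + x) powr s) has_real_derivative K * (s * (1 + x) powr (s - 1))) (at x)"
      using \<open>x > 0\<close> by (auto intro!: derivative_eq_intros)
    show "G x \<le> K * (s * (1 + x) powr (s - 1)) + (1 + x) powr (- lam) * (K * (1 + x) powr s)"
      unfolding s_def K_def using \<open>x > 0\<close> \<open>C \<ge> 0\<close> G[OF \<open>x > 0\<close>] small[OF x(1)]
      by (intro shifted_powr_supersolution_ineq) auto
  qed (rule start)
  then show ?thesis
    unfolding s_def by blast
qed

lemma growth_bound_of_split:
  fixes Y :: "real \<Rightarrow> real"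
  assumes "T > 0" "\<And>t. 0 < t \<Longrightarrow> t \<le> T \<Longrightarrow> Y t \<le> B"
    and "\<And>t. T \<le> t \<Longrightarrow> Y t \<le> K * (1 + t) powr s"
  shows "\<exists>C. \<forall>t>0. Y t \<le> C * (1 + t) powr s"
proof -
  define B' where "B' = max 0 B * (1 + T) powr \<bar>s\<bar>"
  have "Y t \<le> max B' K * (1 + t) powr s" if "t > 0" for t
  proof (cases "t \<le> T")
    case True
    have "(1 + t) powr (- s) \<le> (1 + T) powr \<bar>s\<bar>"
      using shifted_powr_le_abs[of t T "- s"] that True by simp
    then have "1 \<le> (1 + T) powr \<bar>s\<bar> * (1 + t) powr s"
      using that by (simp add: powr_minus divide_simps)
    from mult_left_mono[OF this, of "max 0 B"]
    have "B \<le> B' * (1 + t) powr s"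
      unfolding B'_def by (simp add: mult.assoc)
    also have "\<dots> \<le> max B' K * (1 + t) powr s"
      by (intro mult_right_mono) auto
    finally show ?thesis
      using assms(2)[OF that True] by simp
  next
    case False
    have "K * (1 + t) powr s \<le> max B' K * (1 + t) powr s"
      by (intro mult_right_mono) auto
    then show ?thesis
      using assms(3)[of t] False by simp
  qed
  then show ?thesis
    by blast
qed

lemma linear_ode_upper_growth:
  fixes Y G :: "real \<Rightarrow> real"
  assumes lam: "0 \<le> lam" "lam < 1"
    and Y: "\<And>t. t > 0 \<Longrightarrow> (Y has_real_derivative - ((1 + t) powr (- lam)) * Y t + G t) (at t)"
    and G: "\<And>t. t > 0 \<Longrightarrow> \<bar>G t\<bar> \<le> C * (1 + t) powr r"
  shows "\<exists>C'. \<forall>t>0. Y t \<le> C' * (1 + t) powr (r + lam)"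
proof -
  have "((\<lambda>t. \<bar>r + lam\<bar> * (1 + t) powr (lam - 1)) \<longlongrightarrow> 0) at_top"
    using lam by real_asymp
  then have "eventually (\<lambda>t. \<bar>r + lam\<bar> * (1 + t) powr (lam - 1) < 1 / 2) at_top"
    by (rule order_tendstoD(2)) simp
  then obtain T0 where T0: "\<And>t. t \<ge> T0 \<Longrightarrow> \<bar>r + lam\<bar> * (1 + t) powr (lam - 1) < 1 / 2"
    unfolding eventually_at_top_linorder by blast
  define T where "T = max 1 T0"
  have "T > 0" and small: "\<And>t. t \<ge> T \<Longrightarrow> \<bar>r + lam\<bar> * (1 + t) powr (lam - 1) \<le> 1 / 2"
    unfolding T_def using T0 by (auto intro: less_imp_le)
  obtain B where "\<And>t. 0 < t \<Longrightarrow> t \<le> T \<Longrightarrow> Y t \<le> B"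
    using linear_ode_bounded_before[OF lam Y G] by blast
  moreover obtain K where "\<And>t. T \<le> t \<Longrightarrow> Y t \<le> K * (1 + t) powr (r + lam)"
    using linear_ode_eventual_growth[OF lam \<open>T > 0\<close> Y G small] by blast
  ultimately show ?thesis
    using growth_bound_of_split[OF \<open>T > 0\<close>] by blast
qed

lemma linear_ode_growth_bound:
  fixes Y G :: "real \<Rightarrow> real"
  assumes lam: "0 \<le> lam" "lam < 1"
    and Y: "\<And>t. t > 0 \<Longrightarrow> (Y has_real_derivative - ((1 + t) powr (- lam)) * Y t + G t) (at t)"
    and G: "\<And>t. t > 0 \<Longrightarrow> \<bar>G t\<bar> \<le> C * (1 + t) powr r"
  shows "\<exists>C'. \<forall>t>0. \<bar>Y t\<bar> \<le> C' * (1 + t) powr (r + lam)"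
proof -
  obtain C1 where C1: "\<forall>t>0. Y t \<le> C1 * (1 + t) powr (r + lam)"
    using linear_ode_upper_growth[OF lam Y G] by blast
  have "((\<lambda>t. - Y t) has_real_derivative - ((1 + t) powr (- lam)) * (- Y t) + - G t) (at t)"
    if "t > 0" for t
    using Y[OF that] by (auto intro!: derivative_eq_intros)
  from linear_ode_upper_growth[OF lam this, of C r] G
  obtain C2 where C2: "\<forall>t>0. - Y t \<le> C2 * (1 + t) powr (r + lam)"
    by auto
  have "\<bar>Y t\<bar> \<le> max C1 C2 * (1 + t) powr (r + lam)" if "t > 0" for t
  proof -
    have "C1 * (1 + t) powr (r + lam) \<le> max C1 C2 * (1 + t) powr (r + lam)"
      "C2 * (1 + t) powr (r + lam) \<le> max C1 C2 * (1 + t) powr (r + lam)"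
      by (intro mult_right_mono; simp)+
    then show ?thesis
      using C1[rule_format, OF that] C2[rule_format, OF that] unfolding abs_le_iff by linarith
  qed
  then show ?thesis by blast
qed

lemma symbol_upto_linear_ode:
  fixes Z F :: "real \<Rightarrow> real"
  assumes lam: "0 \<le> lam" "lam < 1"
    and "symbol_upto k m F"
    and "\<And>t. t > 0 \<Longrightarrow> (Z has_real_derivative - ((1 + t) powr (- lam)) * Z t + F t) (at t)"
  shows "symbol_upto k (m + lam) Z"
  using assms(3,4)
proof (induction k arbitrary: m Z F)
  case 0
  then obtain C where "\<forall>t>0. \<bar>F t\<bar> \<le> C * (1 + t) powr m" by auto
  with linear_ode_growth_bound[OF lam 0(2)] have "\<exists>C'. \<forall>t>0. \<bar>Z t\<bar> \<le> C' * (1 + t) powr (m + lam)"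
    by blast
  moreover have "Z differentiable at t" if "t > 0" for t
    using 0(2)[OF that] by (auto simp: real_differentiable_def)
  ultimately show ?case by simp
next
  case (Suc k)
  have Z: "symbol_upto k (m + lam) Z"
    using Suc.IH[OF symbol_upto_SucD[OF Suc.prems(1)] Suc.prems(2)] .
  \<comment> \<open>Differentiating the equation gives one of the same shape for \<open>Z'\<close>.\<close>
  define G where "G t = deriv F t + lam * ((1 + t) powr (- lam - 1) * Z t)" for t
  have dZ: "deriv Z t = - ((1 + t) powr (- lam)) * Z t + F t" if "t > 0" for t
    using Suc.prems(2)[OF that] by (rule DERIV_imp_deriv)
  have dZ': "(deriv Z has_real_derivative - ((1 + t) powr (- lam)) * deriv Z t + G t) (at t)"
    if "t > 0" for t
  proof (subst DERIV_cong_ev[OF refl eventually_eq_on_pos[OF dZ that] refl])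
    show "((\<lambda>t. - ((1 + t) powr (- lam)) * Z t + F t) has_real_derivative
        - ((1 + t) powr (- lam)) * deriv Z t + G t) (at t)"
      unfolding G_def dZ[OF that]
      using that Suc.prems(2)[OF that] symbol_upto_has_derivative[OF Suc.prems(1) that]
      by (auto intro!: derivative_eq_intros simp: algebra_simps)
  qed
  have "symbol_upto k (- lam - 1 + (m + lam)) (\<lambda>t. (1 + t) powr (- lam - 1) * Z t)"
    by (rule symbol_upto_mult[OF symbol_upto_shifted_powr Z])
  then have "symbol_upto k (m - 1) (\<lambda>t. (1 + t) powr (- lam - 1) * Z t)"
    by simp
  then have "symbol_upto k (m - 1) G"
    unfolding G_def using Suc.prems(1) by (intro symbol_upto_add symbol_upto_cmult) simp_all
  from Suc.IH[OF this dZ'] have "symbol_upto k (m + lam - 1) (deriv Z)"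
    by (simp add: diff_add_eq)
  moreover have "symbol_upto 0 (m + lam) Z"
    by (rule symbol_upto_mono[OF Z]) simp
  ultimately show ?case
    by (simp only: symbol_upto.simps(2))
qed

section \<open>The damped Emden--Fowler equation\<close>

locale damped_emden_fowler =
  fixes lam p :: real and th th' :: "real \<Rightarrow> real"
  assumes lam: "0 \<le> lam" "lam < 1" and p: "1 < p"
    and th_deriv: "\<And>t. t \<ge> 0 \<Longrightarrow> (th has_real_derivative th' t) (at t within {0..})"
    and th'_deriv: "\<And>t. t > 0 \<Longrightarrow> (th' has_real_derivative
        - ((1 + t) powr (- lam)) * th' t + (1 + lam) / p * th t powr (1 - p)) (at t)"
    and th_pos: "\<And>t. t \<ge> 0 \<Longrightarrow> th t > 0"
    and th_0: "th 0 = 1" and th'_0: "th' 0 > 0"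
begin

definition kap :: real where "kap = (1 + lam) / p"

lemma kap_pos: "kap > 0"
  using lam p by (simp add: kap_def)

lemma kap_times_p: "kap * p = 1 + lam"
  using p by (simp add: kap_def)

lemma th_has_derivative: "t > 0 \<Longrightarrow> (th has_real_derivative th' t) (at t)"
  using th_deriv[of t] at_within_interior[of t "{0..}"] by simp

lemma th'_has_derivative:
  "t > 0 \<Longrightarrow> (th' has_real_derivative - ((1 + t) powr (- lam)) * th' t + kap * th t powr (1 - p)) (at t)"
  unfolding kap_def by (rule th'_deriv)

lemma continuous_on_th: "continuous_on {0..} th"
  using th_deriv by (auto simp: continuous_on_eq_continuous_within intro: DERIV_continuous)

lemma th'_pos_near_0: "\<exists>\<xi>. 0 < \<xi> \<and> \<xi> < 1 \<and> th' \<xi> > 0"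
proof -
  have "((\<lambda>s. (th s - th 0) / (s - 0)) \<longlongrightarrow> th' 0) (at 0 within {0..})"
    using th_deriv[of 0] by (simp add: has_field_derivative_iff)
  from order_tendstoD(1)[OF this th'_0]
  obtain d where d: "d > 0"
    and quot: "\<And>s. s \<in> {0..} \<Longrightarrow> s \<noteq> 0 \<Longrightarrow> dist s 0 < d \<Longrightarrow> 0 < (th s - th 0) / (s - 0)"
    unfolding eventually_at by blast
  define s where "s = min (d / 2) (1 / 2)"
  have s: "0 < s" "s < 1" "s < d"
    unfolding s_def using d by auto
  have incr: "th 0 < th s"
    using quot[of s] s by (simp add: zero_less_divide_iff)
  have "continuous_on {0..s} th"
    using continuous_on_th by (rule continuous_on_subset) auto
  moreover have "th differentiable at x" if "0 < x" for x
    using th_has_derivative[OF that] by (auto simp: real_differentiable_def)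
  ultimately obtain l \<xi> where \<xi>: "0 < \<xi>" "\<xi> < s" "(th has_real_derivative l) (at \<xi>)"
    and "th s - th 0 = (s - 0) * l"
    using MVT[OF s(1)] by blast
  moreover have "l = th' \<xi>"
    using DERIV_unique[OF \<xi>(3) th_has_derivative[OF \<xi>(1)]] .
  ultimately have "0 < s * th' \<xi>"
    using incr by simp
  then show ?thesis
    using \<xi> s by (intro exI[of _ \<xi>]) (auto simp: zero_less_mult_iff)
qed

lemma th'_pos: "t \<ge> 1 \<Longrightarrow> th' t > 0"
proof -
  assume "t \<ge> 1"
  obtain \<xi> where \<xi>: "0 < \<xi>" "\<xi> < 1" "th' \<xi> > 0"
    using th'_pos_near_0 by blast
  let ?A = "damping_primitive lam"
  have "exp (?A \<xi>) * th' \<xi> \<le> exp (?A t) * th' t"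
  proof (rule integrating_factor_mono[where u = th' and B = ?A and b = "\<lambda>s. (1 + s) powr (- lam)"
        and u' = "\<lambda>s. - ((1 + s) powr (- lam)) * th' s + kap * th s powr (1 - p)"])
    show "\<xi> \<le> t" using \<xi> \<open>t \<ge> 1\<close> by simp
  qed (use \<xi> th'_has_derivative damping_primitive_has_derivative[OF lam(2)] kap_pos in auto)
  moreover have "0 < exp (?A \<xi>) * th' \<xi>"
    using \<xi> by simp
  ultimately have "0 < exp (?A t) * th' t"
    by linarith
  then show ?thesis
    by (simp add: zero_less_mult_iff)
qed

text \<open>\<open>P = (1 + t)\<^sup>-\<^sup>\<lambda> (\<theta>\<^sup>p)'\<close> obeys \<open>P' \<ge> (1 + \<lambda>) (1 + t)\<^sup>-\<^sup>\<lambda> (1 - P)\<close> for \<open>t \<ge> 1\<close>,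
  so it stays away from \<open>0\<close>; this is what makes \<open>\<theta>\<^sup>p\<close> grow like \<open>(1 + t)\<^sup>1\<^sup>+\<^sup>\<lambda>\<close>.\<close>

definition P :: "real \<Rightarrow> real"
  where "P t = p * (1 + t) powr (- lam) * th t powr (p - 1) * th' t"

lemma P_has_derivative:
  assumes "t > 0"
  shows "(P has_real_derivative (1 + lam) * (1 + t) powr (- lam) * (1 - P t)
      + lam * P t * ((1 + t) powr (- lam) - 1 / (1 + t))
      + p * (p - 1) * (1 + t) powr (- lam) * th t powr (p - 1) * th' t ^ 2 / th t) (at t)"
    (is "(P has_real_derivative ?D) _")
proof -
  have th: "th t > 0" using th_pos assms by simp
  have raw: "(P has_real_derivative
      p * (- lam * (1 + t) powr (- lam - 1)) * th t powr (p - 1) * th' t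
      + p * (1 + t) powr (- lam) * ((p - 1) * th t powr (p - 1 - 1) * th' t) * th' t
      + p * (1 + t) powr (- lam) * th t powr (p - 1)
        * (- ((1 + t) powr (- lam)) * th' t + kap * th t powr (1 - p))) (at t)"
    (is "(P has_real_derivative ?R) _")
    unfolding P_def using assms th th_has_derivative[OF assms] th'_has_derivative[OF assms]
    by (auto intro!: derivative_eq_intros DERIV_fun_powr simp: algebra_simps)
  define a b where "a = (1 + t) powr (- lam)" and "b = th t powr (p - 1)"
  have e: "(1 + t) powr (- lam - 1) = a / (1 + t)"
    "th t powr (p - 1 - 1) = b / th t"
    "th t powr (1 - p) = 1 / b"
    unfolding a_def b_def using assms th
    by (simp_all add: powr_diff powr_minus_divide power2_eq_square flip: powr_minus)
  have alg: "p * (- lam * (a / u)) * b * y + p * a * ((p - 1) * (b / x) * y) * y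
      + p * a * b * (- a * y + (1 + lam) / p * (1 / b))
    = (1 + lam) * a * (1 - p * a * b * y) + lam * (p * a * b * y) * (a - 1 / u)
      + p * (p - 1) * a * b * y ^ 2 / x"
    if "u \<noteq> 0" "x \<noteq> 0" "b \<noteq> 0" for a b u x y :: real
    using that p by (simp add: field_simps power2_eq_square)
  have "b \<noteq> 0"
    unfolding b_def using th by simp
  then have "?R = ?D"
    unfolding P_def kap_def e a_def[symmetric] b_def[symmetric]
    by (rule alg[rotated 2]) (use assms th in auto)
  with raw show ?thesis
    by (rule DERIV_cong)
qed

lemma P_derivative_excess_nonneg:
  assumes "t \<ge> 1"
  shows "0 \<le> lam * P t * ((1 + t) powr (- lam) - 1 / (1 + t))
    + p * (p - 1) * (1 + t) powr (- lam) * th t powr (p - 1) * th' t ^ 2 / th t"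
proof -
  have "(1 + t) powr (- 1) \<le> (1 + t) powr (- lam)"
    using lam assms by (intro powr_mono) auto
  then have "0 \<le> (1 + t) powr (- lam) - 1 / (1 + t)"
    using assms by (simp add: powr_minus_divide)
  moreover have "0 \<le> P t"
    unfolding P_def using p th_pos[of t] th'_pos[OF assms] assms by simp
  ultimately have "0 \<le> lam * P t * ((1 + t) powr (- lam) - 1 / (1 + t))"
    using lam by simp
  moreover have "0 \<le> p * (p - 1) * (1 + t) powr (- lam) * th t powr (p - 1) * th' t ^ 2 / th t"
    using p th_pos[of t] assms by simp
  ultimately show ?thesis
    by simp
qed

lemma P_lower_bound: "\<exists>c>0. \<forall>t\<ge>1. c \<le> P t"
proof -
  let ?A = "damping_primitive lam"
  have "P 1 > 0"
    unfolding P_def using p th'_pos[of 1] th_pos[of 1] by simp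
  have "min 1 (P 1) \<le> P t" if t: "t \<ge> 1" for t
  proof -
    have "exp ((1 + lam) * ?A 1) * (P 1 - 1) \<le> exp ((1 + lam) * ?A t) * (P t - 1)"
    proof (rule integrating_factor_mono[where u = "\<lambda>s. P s - 1" and B = "\<lambda>s. (1 + lam) * ?A s"
          and b = "\<lambda>s. (1 + lam) * (1 + s) powr (- lam)"])
      fix s assume s: "1 \<le> s" "s \<le> t"
      then have "s > 0" by simp
      show "((\<lambda>s. P s - 1) has_real_derivative (1 + lam) * (1 + s) powr (- lam) * (1 - P s)
          + lam * P s * ((1 + s) powr (- lam) - 1 / (1 + s))
          + p * (p - 1) * (1 + s) powr (- lam) * th s powr (p - 1) * th' s ^ 2 / th s) (at s)"
        using P_has_derivative[OF \<open>s > 0\<close>] by (auto intro!: derivative_eq_intros)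
      show "((\<lambda>s. (1 + lam) * ?A s) has_real_derivative (1 + lam) * (1 + s) powr (- lam)) (at s)"
        using damping_primitive_has_derivative[OF lam(2), of s] \<open>s > 0\<close>
        by (auto intro!: derivative_eq_intros)
      show "0 \<le> (1 + lam) * (1 + s) powr (- lam) * (1 - P s)
          + lam * P s * ((1 + s) powr (- lam) - 1 / (1 + s))
          + p * (p - 1) * (1 + s) powr (- lam) * th s powr (p - 1) * th' s ^ 2 / th s
          + (1 + lam) * (1 + s) powr (- lam) * (P s - 1)"
        using P_derivative_excess_nonneg[OF s(1)] by (simp add: algebra_simps)
    qed (use t in simp)
    moreover have "exp ((1 + lam) * ?A 1) \<le> exp ((1 + lam) * ?A t)"
      using damping_primitive_mono[OF lam(2), of 1 t] t lam by simp
    ultimately have "P t < 1 \<Longrightarrow> P 1 \<le> P t"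
      by (smt (verit, best) exp_gt_zero mult_le_cancel_left mult_right_mono_neg)
    then show ?thesis
      by linarith
  qed
  then show ?thesis
    using \<open>P 1 > 0\<close> by (intro exI[of _ "min 1 (P 1)"]) auto
qed

lemma th_powr_p_lower_bound: "\<exists>c>0. \<forall>t\<ge>1. c * (1 + t) powr (1 + lam) \<le> th t powr p"
proof -
  obtain cP where cP: "cP > 0" "\<And>t. t \<ge> 1 \<Longrightarrow> cP \<le> P t"
    using P_lower_bound by blast
  define c where "c = min (cP / (1 + lam)) (th 1 powr p / 2 powr (1 + lam))"
  have "c > 0"
    unfolding c_def using cP lam th_pos[of 1] by simp
  have "c * (1 + t) powr (1 + lam) \<le> th t powr p" if t: "t \<ge> 1" for t
  proof -
    have "\<exists>y. ((\<lambda>s. th s powr p - c * (1 + s) powr (1 + lam)) has_real_derivative y) (at s) \<and> 0 \<le> y"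
      if s: "1 \<le> s" "s \<le> t" for s
    proof (intro exI conjI)
      show "((\<lambda>s. th s powr p - c * (1 + s) powr (1 + lam)) has_real_derivative
          (1 + s) powr lam * P s - c * ((1 + lam) * (1 + s) powr lam)) (at s)"
        using s th_has_derivative[of s] th_pos[of s]
        by (auto intro!: derivative_eq_intros DERIV_fun_powr
            simp: P_def powr_diff field_simps powr_minus_divide)
      have "c \<le> cP / (1 + lam)"
        unfolding c_def by simp
      then have "c * (1 + lam) \<le> cP"
        using lam by (simp add: pos_le_divide_eq)
      then have "c * ((1 + lam) * (1 + s) powr lam) \<le> cP * (1 + s) powr lam"
        by (simp add: mult.assoc[symmetric] mult_right_mono)
      also have "\<dots> \<le> (1 + s) powr lam * P s"
        using cP(2)[of s] s by (simp add: mult.commute mult_left_mono)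
      finally show "0 \<le> (1 + s) powr lam * P s - c * ((1 + lam) * (1 + s) powr lam)"
        by simp
    qed
    from DERIV_nonneg_imp_nondecreasing[OF t this]
    have "th 1 powr p - c * 2 powr (1 + lam) \<le> th t powr p - c * (1 + t) powr (1 + lam)"
      by simp
    moreover have "c * 2 powr (1 + lam) \<le> th 1 powr p"
      using min.cobounded2[of "cP / (1 + lam)" "th 1 powr p / 2 powr (1 + lam)"]
      unfolding c_def[symmetric] by (simp add: pos_le_divide_eq)
    ultimately show ?thesis
      by simp
  qed
  with \<open>c > 0\<close> show ?thesis
    by blast
qed

lemma th_lower_bound: "\<exists>c>0. \<forall>t\<ge>0. c * (1 + t) powr kap \<le> th t"
proof -
  obtain c1 where c1: "c1 > 0" "\<And>t. t \<ge> 1 \<Longrightarrow> c1 * (1 + t) powr (1 + lam) \<le> th t powr p"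
    using th_powr_p_lower_bound by blast
  have far: "c1 powr (1 / p) * (1 + t) powr kap \<le> th t" if "t \<ge> 1" for t
  proof -
    have "(c1 * (1 + t) powr (1 + lam)) powr (1 / p) \<le> (th t powr p) powr (1 / p)"
      using c1 that p by (intro powr_mono2) auto
    then show ?thesis
      using c1(1) that p th_pos[of t] by (simp add: powr_mult powr_powr kap_def)
  qed
  have "continuous_on {0..1} th"
    using continuous_on_th by (rule continuous_on_subset) auto
  then obtain t0 where t0: "t0 \<in> {0..1}" "\<And>t. t \<in> {0..1} \<Longrightarrow> th t0 \<le> th t"
    using continuous_attains_inf[OF compact_Icc] by (metis atLeastAtMost_iff order_refl zero_le_one empty_iff)
  define c where "c = min (th t0 * 2 powr (- kap)) (c1 powr (1 / p))"
  have "c > 0"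
    unfolding c_def using c1 th_pos t0 by simp
  have "c * (1 + t) powr kap \<le> th t" if "t \<ge> 0" for t
  proof (cases "t \<le> 1")
    case True
    have "c * (1 + t) powr kap \<le> th t0 * 2 powr (- kap) * 2 powr kap"
      unfolding c_def using True that kap_pos th_pos[of t0] t0
      by (intro mult_mono powr_mono2) auto
    also have "\<dots> = th t0"
      by (simp flip: powr_add)
    also have "\<dots> \<le> th t"
      using t0 True that by simp
    finally show ?thesis .
  next
    case False
    have "c * (1 + t) powr kap \<le> c1 powr (1 / p) * (1 + t) powr kap"
      unfolding c_def by (intro mult_right_mono) auto
    also have "\<dots> \<le> th t"
      using far False by simp
    finally show ?thesis .
  qed
  with \<open>c > 0\<close> show ?thesis
    by blast
qed

lemma th'_symbol_upto:
  assumes "symbol_upto k (kap * (1 - p)) (\<lambda>t. th t powr (1 - p))"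
  shows "symbol_upto k (kap - 1) th'"
proof -
  have "symbol_upto k (kap * (1 - p) + lam) th'"
    using symbol_upto_linear_ode[OF lam symbol_upto_cmult[OF assms] th'_has_derivative] .
  moreover have "kap * (1 - p) + lam = kap - 1"
    using kap_times_p by (simp add: algebra_simps)
  ultimately show ?thesis
    by (simp only:)
qed

lemma th_powr_one_minus_p_bound: "symbol_upto 0 (kap * (1 - p)) (\<lambda>t. th t powr (1 - p))"
proof -
  obtain c where c: "c > 0" "\<And>t. t \<ge> 0 \<Longrightarrow> c * (1 + t) powr kap \<le> th t"
    using th_lower_bound by blast
  have "th t powr (1 - p) \<le> c powr (1 - p) * (1 + t) powr (kap * (1 - p))" if "t > 0" for t
    using c that p by (intro powr_le_of_lower_bound) auto
  moreover have "(\<lambda>t. th t powr (1 - p)) differentiable at t" if "t > 0" for t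
    using DERIV_fun_powr[OF th_has_derivative[OF that], of "1 - p"] th_pos[of t] that
    by (auto simp: real_differentiable_def)
  ultimately show ?thesis
    by (auto intro!: exI[of _ "c powr (1 - p)"])
qed

lemma th_upper_bound: "\<exists>C. \<forall>t>0. th t \<le> C * (1 + t) powr kap"
proof -
  obtain C where C: "\<forall>t>0. \<bar>th' t\<bar> \<le> C * (1 + t) powr (kap - 1)"
    using symbol_upto_bound[OF th'_symbol_upto[OF th_powr_one_minus_p_bound]] by blast
  have "C \<ge> 0"
    by (rule bound_coeff_nonneg[OF C])
  have "th t \<le> (1 + C / kap) * (1 + t) powr kap" if "t > 0" for t
  proof -
    have "\<bar>th t - th 0\<bar> \<le> C / kap * (1 + t) powr kap - C / kap * (1 + 0) powr kap"
    proof (rule abs_increment_le[where f' = th' and g' = "\<lambda>s. C * (1 + s) powr (kap - 1)"])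
      show "continuous_on {0..t} th"
        using continuous_on_th by (rule continuous_on_subset) auto
      show "continuous_on {0..t} (\<lambda>s. C / kap * (1 + s) powr kap)"
        by (intro continuous_intros) auto
      fix s assume s: "0 < s" "s < t"
      show "(th has_real_derivative th' s) (at s)"
        using th_has_derivative s by simp
      show "((\<lambda>s. C / kap * (1 + s) powr kap) has_real_derivative C * (1 + s) powr (kap - 1)) (at s)"
        using s kap_pos by (auto intro!: derivative_eq_intros)
      show "\<bar>th' s\<bar> \<le> C * (1 + s) powr (kap - 1)"
        using C s by simp
    qed (use that in simp)
    then have "th t - 1 \<le> C / kap * (1 + t) powr kap - C / kap"
      using th_0 by (simp add: abs_le_iff)
    moreover have "1 \<le> (1 + t) powr kap"
      using that kap_pos by (intro ge_one_powr_ge_zero) auto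
    moreover have "0 \<le> C / kap"
      using \<open>C \<ge> 0\<close> kap_pos by simp
    ultimately show ?thesis
      unfolding distrib_right by linarith
  qed
  then show ?thesis
    by blast
qed

lemma th_symbol: "symbol kap th"
proof -
  obtain c where c: "c > 0" "\<And>t. t \<ge> 0 \<Longrightarrow> c * (1 + t) powr kap \<le> th t"
    using th_lower_bound by blast
  obtain C where "\<forall>t>0. th t \<le> C * (1 + t) powr kap"
    using th_upper_bound by blast
  moreover have "\<bar>th t\<bar> = th t" "th differentiable at t" if "t > 0" for t
    using th_pos[of t] th_has_derivative[OF that] that by (auto simp: real_differentiable_def)
  ultimately have base: "symbol_upto 0 kap th"
    by (auto intro!: exI[of _ C])
  have "symbol_upto k kap th" for k
  proof (induction k)
    case (Suc k)
    \<comment> \<open>Bounds on \<open>\<theta>\<close> bound \<open>\<theta>\<^sup>1\<^sup>-\<^sup>p\<close>, the forcing of the linear equation for \<open>\<theta>'\<close>.\<close>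
    have "symbol_upto k (kap * (1 - p)) (\<lambda>t. th t powr (1 - p))"
      using c by (intro symbol_upto_powr[OF Suc.IH]) auto
    then have "symbol_upto k (kap - 1) th'"
      by (rule th'_symbol_upto)
    then have "symbol_upto k (kap - 1) (deriv th)"
      by (rule symbol_upto_cong[rotated]) (simp add: DERIV_imp_deriv[OF th_has_derivative])
    with base show ?case
      by simp
  qed (rule base)
  then show ?thesis
    unfolding symbol_def ..
qed

lemma th_powr_symbol: "symbol (kap * r) (\<lambda>t. th t powr r)"
proof -
  obtain c where "c > 0" "\<And>t. t \<ge> 0 \<Longrightarrow> c * (1 + t) powr kap \<le> th t"
    using th_lower_bound by blast
  then show ?thesis
    by (intro symbol_powr[OF th_symbol]) auto
qed

text \<open>Dropping \<open>\<theta>''\<close> from the equation gives \<open>\<theta>' \<approx> \<kappa> \<theta>\<^sup>1\<^sup>-\<^sup>p (1 + t)\<^sup>\<lambda>\<close>; the error of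
  this approximation is one order smaller than \<open>\<theta>'\<close>.\<close>

definition quasi_slope :: "real \<Rightarrow> real"
  where "quasi_slope t = kap * (th t powr (1 - p) * (1 + t) powr lam)"

definition slope_error :: "real \<Rightarrow> real"
  where "slope_error t = th' t - quasi_slope t"

lemma quasi_slope_symbol: "symbol (kap - 1) quasi_slope"
proof -
  have "symbol (kap * (1 - p) + lam) (\<lambda>t. th t powr (1 - p) * (1 + t) powr lam)"
    by (rule symbol_mult[OF th_powr_symbol symbol_shifted_powr])
  then have "symbol (kap * (1 - p) + lam) quasi_slope"
    unfolding quasi_slope_def[abs_def] by (rule symbol_cmult)
  moreover have "kap * (1 - p) + lam = kap - 1"
    using kap_times_p by (simp add: algebra_simps)
  ultimately show ?thesis
    by (simp only:)
qed

lemma slope_error_symbol: "symbol (kap + lam - 2) slope_error"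
proof -
  have qs: "symbol (kap - 1 - 1) (deriv quasi_slope)"
    using symbol_deriv[OF quasi_slope_symbol] .
  have dS: "(slope_error has_real_derivative
      - ((1 + t) powr (- lam)) * slope_error t + - deriv quasi_slope t) (at t)" if "t > 0" for t
  proof -
    have "(quasi_slope has_real_derivative deriv quasi_slope t) (at t)"
      using symbol_has_derivative[OF quasi_slope_symbol that] .
    moreover have "(1 + t) powr (- lam) * quasi_slope t = kap * th t powr (1 - p)"
      unfolding quasi_slope_def using that by (simp flip: powr_add)
    ultimately show ?thesis
      unfolding slope_error_def[abs_def] using th'_has_derivative[OF that]
      by (auto intro!: derivative_eq_intros simp: algebra_simps)
  qed
  have "symbol (kap - 1 - 1) (\<lambda>t. - deriv quasi_slope t)"
    using symbol_cmult[OF qs, of "- 1"] by simp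
  then have "symbol_upto k (kap - 1 - 1 + lam) slope_error" for k
    using symbol_upto_linear_ode[OF lam _ dS] unfolding symbol_def by blast
  moreover have "kap - 1 - 1 + lam = kap + lam - 2"
    by simp
  ultimately show ?thesis
    unfolding symbol_def by (simp only:) blast
qed

definition deviation :: "real \<Rightarrow> real"
  where "deviation t = th t powr p - (1 + t) powr (1 + lam)"

lemma deviation_has_derivative:
  assumes "t > 0"
  shows "(deviation has_real_derivative p * (th t powr (p - 1) * slope_error t)) (at t)"
proof -
  have "(deviation has_real_derivative p * th t powr (p - 1) * th' t - (1 + lam) * (1 + t) powr lam) (at t)"
    unfolding deviation_def[abs_def] using assms th_pos[of t] th_has_derivative[OF assms]
    by (auto intro!: derivative_eq_intros DERIV_fun_powr)
  moreover have "p * (th t powr (p - 1) * quasi_slope t) = (1 + lam) * (1 + t) powr lam"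
  proof -
    have "th t powr (1 - p) = 1 / th t powr (p - 1)"
      using th_pos[of t] assms by (simp add: powr_diff powr_minus_divide flip: powr_minus)
    then show ?thesis
      unfolding quasi_slope_def kap_def using assms th_pos[of t] p by (simp add: field_simps)
  qed
  ultimately show ?thesis
    unfolding slope_error_def by (simp add: algebra_simps)
qed

lemma deriv_deviation_symbol: "symbol (2 * lam - 1) (deriv deviation)"
proof -
  have "symbol (kap * (p - 1) + (kap + lam - 2)) (\<lambda>t. th t powr (p - 1) * slope_error t)"
    by (rule symbol_mult[OF th_powr_symbol slope_error_symbol])
  moreover have "kap * (p - 1) + (kap + lam - 2) = 2 * lam - 1"
    using kap_times_p by (simp add: algebra_simps)
  ultimately have "symbol (2 * lam - 1) (\<lambda>t. th t powr (p - 1) * slope_error t)"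
    by (simp only:)
  then have "symbol (2 * lam - 1) (\<lambda>t. p * (th t powr (p - 1) * slope_error t))"
    by (rule symbol_cmult)
  then show ?thesis
    by (rule symbol_cong[rotated]) (simp add: DERIV_imp_deriv[OF deviation_has_derivative])
qed

lemma continuous_on_deviation: "continuous_on {0..} deviation"
proof -
  have "continuous_on {0..} (\<lambda>t. th t powr p)"
    using continuous_on_th th_pos p by (intro continuous_on_powr') (auto simp: less_imp_le)
  moreover have "continuous_on {0..} (\<lambda>t::real. (1 + t) powr (1 + lam))"
    by (intro continuous_intros) auto
  ultimately show ?thesis
    unfolding deviation_def[abs_def] by (rule continuous_on_diff)
qed

lemma deviation_0: "deviation 0 = 0"
  unfolding deviation_def using th_0 by simp

lemma deriv_deviation_bound: "\<exists>C\<ge>0. \<forall>t>0. \<bar>deriv deviation t\<bar> \<le> C * (1 + t) powr (2 * lam - 1)"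
proof -
  obtain C where C: "\<forall>t>0. \<bar>deriv deviation t\<bar> \<le> C * (1 + t) powr (2 * lam - 1)"
    using deriv_deviation_symbol symbol_upto_bound unfolding symbol_def by blast
  with bound_coeff_nonneg[OF C] show ?thesis
    by blast
qed

lemma deviation_bound_by_primitive:
  assumes "t \<ge> 0" "continuous_on {0..t} g"
    and "\<And>s. 0 < s \<Longrightarrow> s < t \<Longrightarrow> (g has_real_derivative g' s) (at s)"
    and "\<And>s. 0 < s \<Longrightarrow> s < t \<Longrightarrow> \<bar>deriv deviation s\<bar> \<le> g' s"
  shows "\<bar>deviation t\<bar> \<le> g t - g 0"
proof -
  have "\<bar>deviation t - deviation 0\<bar> \<le> g t - g 0"
  proof (rule abs_increment_le[OF assms(1) _ assms(2) _ assms(3,4)])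
    show "continuous_on {0..t} deviation"
      using continuous_on_deviation by (rule continuous_on_subset) auto
    fix s :: real assume "0 < s" "s < t"
    from deviation_has_derivative[OF \<open>0 < s\<close>]
    show "(deviation has_real_derivative deriv deviation s) (at s)"
      by (subst DERIV_imp_deriv)
  qed
  then show ?thesis
    using deviation_0 by simp
qed

definition Q :: "real \<Rightarrow> real"
  where "Q t = (1 + t) powr (- lam) * th t powr p - (1 + t)"

lemma Q_eq: "t \<ge> 0 \<Longrightarrow> Q t = (1 + t) powr (- lam) * deviation t"
  unfolding Q_def deviation_def by (simp add: right_diff_distrib flip: powr_add)

lemma Q_log_bound:
  assumes "lam = 0"
  shows "\<exists>C. \<forall>t\<ge>0. \<bar>Q t\<bar> \<le> C * ln (1 + t)"
proof -
  obtain C where C: "\<forall>t>0. \<bar>deriv deviation t\<bar> \<le> C * (1 + t) powr (2 * lam - 1)"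
    using deriv_deviation_bound by blast
  have "\<bar>Q t\<bar> \<le> C * ln (1 + t)" if "t \<ge> 0" for t
  proof -
    have "\<bar>deviation t\<bar> \<le> C * ln (1 + t) - C * ln (1 + 0)"
    proof (rule deviation_bound_by_primitive[where g' = "\<lambda>s. C / (1 + s)"])
      show "continuous_on {0..t} (\<lambda>s. C * ln (1 + s))"
        by (intro continuous_intros) auto
      fix s :: real assume "0 < s" "s < t"
      then show "((\<lambda>s. C * ln (1 + s)) has_real_derivative C / (1 + s)) (at s)"
        by (auto intro!: derivative_eq_intros)
      show "\<bar>deriv deviation s\<bar> \<le> C / (1 + s)"
        using C \<open>0 < s\<close> assms by (simp add: powr_minus_divide)
    qed (rule that)
    then show ?thesis
      using Q_eq[OF that] assms by simp
  qed
  then show ?thesis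
    by blast
qed

lemma deviation_powr_bound:
  assumes "lam > 0"
  shows "\<exists>C. \<forall>t\<ge>0. \<bar>deviation t\<bar> \<le> C * (1 + t) powr (2 * lam)"
proof -
  obtain C where "C \<ge> 0" and C: "\<forall>t>0. \<bar>deriv deviation t\<bar> \<le> C * (1 + t) powr (2 * lam - 1)"
    using deriv_deviation_bound by blast
  have "\<bar>deviation t\<bar> \<le> C / (2 * lam) * (1 + t) powr (2 * lam)" if "t \<ge> 0" for t
  proof -
    have "\<bar>deviation t\<bar> \<le> C / (2 * lam) * (1 + t) powr (2 * lam) - C / (2 * lam) * (1 + 0) powr (2 * lam)"
    proof (rule deviation_bound_by_primitive[where g' = "\<lambda>s. C * (1 + s) powr (2 * lam - 1)"])
      show "continuous_on {0..t} (\<lambda>s. C / (2 * lam) * (1 + s) powr (2 * lam))"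
        by (intro continuous_intros) auto
      fix s :: real assume "0 < s" "s < t"
      then show "((\<lambda>s. C / (2 * lam) * (1 + s) powr (2 * lam)) has_real_derivative
          C * (1 + s) powr (2 * lam - 1)) (at s)"
        using assms by (auto intro!: derivative_eq_intros)
      show "\<bar>deriv deviation s\<bar> \<le> C * (1 + s) powr (2 * lam - 1)"
        using C \<open>0 < s\<close> by simp
    qed (rule that)
    then have "\<bar>deviation t\<bar> \<le> C / (2 * lam) * (1 + t) powr (2 * lam) - C / (2 * lam)"
      by simp
    moreover have "0 \<le> C / (2 * lam)"
      using \<open>C \<ge> 0\<close> assms by simp
    ultimately show ?thesis
      by linarith
  qed
  then show ?thesis
    by blast
qed

lemma Q_powr_bound:
  assumes "lam > 0"
  shows "\<exists>C. \<forall>t\<ge>0. \<bar>Q t\<bar> \<le> C * (1 + t) powr lam"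
proof -
  obtain C where C: "\<forall>t\<ge>0. \<bar>deviation t\<bar> \<le> C * (1 + t) powr (2 * lam)"
    using deviation_powr_bound[OF assms] by blast
  have "\<bar>Q t\<bar> \<le> C * (1 + t) powr lam" if "t \<ge> 0" for t
  proof -
    have "\<bar>Q t\<bar> = (1 + t) powr (- lam) * \<bar>deviation t\<bar>"
      using Q_eq[OF that] by (simp add: abs_mult)
    also have "\<dots> \<le> (1 + t) powr (- lam) * (C * (1 + t) powr (2 * lam))"
      using C that by (intro mult_left_mono) auto
    also have "\<dots> = C * (1 + t) powr lam"
      using that by (simp add: mult.left_commute flip: powr_add)
    finally show ?thesis .
  qed
  then show ?thesis
    by blast
qed

lemma deriv_Q_symbol: "symbol (lam - 1) (deriv Q)"
proof (cases "lam = 0")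
  case True
  have "deriv deviation t = deriv Q t" if "t > 0" for t
    using Q_eq True that by (intro deriv_cong_ev eventually_eq_on_pos) auto
  with deriv_deviation_symbol True show ?thesis
    by (auto intro: symbol_cong)
next
  case False
  then have "lam > 0"
    using lam by simp
  have "symbol_upto 0 (2 * lam) deviation"
  proof -
    have "deviation differentiable at t" if "t > 0" for t
      using deviation_has_derivative[OF that] by (auto simp: real_differentiable_def)
    moreover obtain C where "\<forall>t\<ge>0. \<bar>deviation t\<bar> \<le> C * (1 + t) powr (2 * lam)"
      using deviation_powr_bound[OF \<open>lam > 0\<close>] by blast
    ultimately show ?thesis
      by (auto intro!: exI[of _ C])
  qed
  then have "symbol (2 * lam) deviation"
    using deriv_deviation_symbol by (rule symbol_iff[THEN iffD2, OF conjI])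
  then have "symbol (- lam + 2 * lam) (\<lambda>t. (1 + t) powr (- lam) * deviation t)"
    by (rule symbol_mult[OF symbol_shifted_powr])
  then have "symbol lam (\<lambda>t. (1 + t) powr (- lam) * deviation t)"
    by simp
  then have "symbol lam Q"
    by (rule symbol_cong[rotated]) (simp add: Q_eq)
  then show ?thesis
    by (rule symbol_deriv)
qed

lemma higher_deriv_Q_bound:
  assumes "k \<ge> 1"
  shows "\<exists>C. \<forall>t>0. \<bar>(deriv ^^ k) Q t\<bar> \<le> C * (1 + t) powr (lam - real k)"
proof -
  obtain j where k: "k = Suc j"
    using assms by (cases k) auto
  obtain C where "\<forall>t>0. \<bar>(deriv ^^ j) (deriv Q) t\<bar> \<le> C * (1 + t) powr (lam - 1 - real j)"
    using deriv_Q_symbol symbol_upto_deriv_bound unfolding symbol_def by blast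
  then show ?thesis
    unfolding k by (intro exI[of _ C]) (simp add: funpow_Suc_right algebra_simps del: funpow.simps)
qed

end

lemma damped_emden_fowler_nu_plus_h:
  fixes n :: nat and gam lam :: real and h h' h'' :: "real \<Rightarrow> real"
  assumes n: "n \<in> {2, 3}"
    and gam: "gam > 1"
    and lam: "0 \<le> lam" "lam < 1"
    and dh: "\<And>t. t \<ge> 0 \<Longrightarrow> (h has_real_derivative h' t) (at t within {0..})"
    and dh': "\<And>t. t > 0 \<Longrightarrow> (h' has_real_derivative h'' t) (at t)"
    and pos: "\<And>t. t \<ge> 0 \<Longrightarrow> nu n gam lam t + h t > 0"
    and ode: "\<And>t. t > 0 \<Longrightarrow>
      h'' t + (1 + t) powr (-lam) * h' t
        - kappa n gam lam * (nu n gam lam t + h t) powr (real n - real n * gam - 1)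
      = - (kappa n gam lam * (kappa n gam lam - 1) * (1 + t) powr (kappa n gam lam - 2))
        - (1 + t) powr (-lam) * (kappa n gam lam * (1 + t) powr (kappa n gam lam - 1))"
    and init: "h 0 = 0" "h' 0 = 0"
  shows "damped_emden_fowler lam (real n * gam - real n + 2) (\<lambda>t. nu n gam lam t + h t)
    (\<lambda>t. kappa n gam lam * (1 + t) powr (kappa n gam lam - 1) + h' t)"
proof
  define p where "p = real n * gam - real n + 2"
  define k where "k = kappa n gam lam"
  have "real n * (gam - 1) > 0"
    using n gam by auto
  then have "p > 2"
    unfolding p_def by (simp add: algebra_simps)
  then show "1 < real n * gam - real n + 2"
    unfolding p_def by simp
  have k: "k = (1 + lam) / p"
    unfolding k_def p_def kappa_def by simp
  then have "k > 0"
    using lam \<open>p > 2\<close> by simp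
  show "0 \<le> lam" "lam < 1"
    by (fact lam)+
  show "nu n gam lam 0 + h 0 = 1"
    using init by (simp add: nu_def)
  show "0 < kappa n gam lam * (1 + 0) powr (kappa n gam lam - 1) + h' 0"
    using \<open>k > 0\<close> init by (simp add: k_def)
  fix t :: real
  show "t \<ge> 0 \<Longrightarrow> nu n gam lam t + h t > 0"
    by (rule pos)
  show "((\<lambda>t. nu n gam lam t + h t) has_real_derivative
      kappa n gam lam * (1 + t) powr (kappa n gam lam - 1) + h' t) (at t within {0..})" if "t \<ge> 0"
    using that dh[OF that] unfolding nu_def
    by (auto intro!: derivative_eq_intros)
  assume "t > 0"
  have "real n - real n * gam - 1 = 1 - p"
    unfolding p_def by simp
  note ode' = ode[OF \<open>t > 0\<close>, unfolded k_def[symmetric] this]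
  have alg: "k * ((k - 1) * z) + h2 = - a * (k * x + h1) + k * y"
    if "h2 + a * h1 - k * y = - (k * (k - 1) * z) - a * (k * x)" for h2 a h1 y z x :: real
    using that by (simp add: algebra_simps)
  have "((\<lambda>t. k * (1 + t) powr (k - 1) + h' t) has_real_derivative
      k * ((k - 1) * (1 + t) powr (k - 2)) + h'' t) (at t)"
    using dh'[OF \<open>t > 0\<close>] \<open>t > 0\<close> by (auto intro!: derivative_eq_intros)
  from DERIV_cong[OF this alg[OF ode']]
  show "((\<lambda>t. kappa n gam lam * (1 + t) powr (kappa n gam lam - 1) + h' t) has_real_derivative
      - ((1 + t) powr (- lam)) * (kappa n gam lam * (1 + t) powr (kappa n gam lam - 1) + h' t)
      + (1 + lam) / (real n * gam - real n + 2) * (nu n gam lam t + h t) powr (1 - (real n * gam - real n + 2))) (at t)"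
    unfolding k_def[symmetric] p_def[symmetric] k[symmetric] .
qed

theorem mainTheorem9:
  fixes n :: nat and gam lam :: real and h h' h'' :: "real \<Rightarrow> real"
  assumes n: "n \<in> {2, 3}"
    and gam: "gam > 1"
    and lam: "0 \<le> lam" "lam < 1"
    and dh: "\<And>t. t \<ge> 0 \<Longrightarrow> (h has_real_derivative h' t) (at t within {0..})"
    and dh': "\<And>t. t > 0 \<Longrightarrow> (h' has_real_derivative h'' t) (at t)"
    and pos: "\<And>t. t \<ge> 0 \<Longrightarrow> nu n gam lam t + h t > 0"
    and ode: "\<And>t. t > 0 \<Longrightarrow>
      h'' t + (1 + t) powr (-lam) * h' t
        - kappa n gam lam * (nu n gam lam t + h t) powr (real n - real n * gam - 1)
      = - (kappa n gam lam * (kappa n gam lam - 1) * (1 + t) powr (kappa n gam lam - 2))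
        - (1 + t) powr (-lam) * (kappa n gam lam * (1 + t) powr (kappa n gam lam - 1))"
    and init: "h 0 = 0" "h' 0 = 0"
  defines "Q \<equiv> \<lambda>t. (1 + t) powr (-lam) * (nu n gam lam t + h t) powr (real n * gam - real n + 2) - (1 + t)"
  shows "(lam = 0 \<longrightarrow> (\<exists>C. \<forall>t\<ge>0. \<bar>Q t\<bar> \<le> C * ln (1 + t)))
       \<and> (0 < lam \<longrightarrow> (\<exists>C. \<forall>t\<ge>0. \<bar>Q t\<bar> \<le> C * (1 + t) powr lam))
       \<and> (\<forall>k::nat. k \<ge> 1 \<longrightarrow>
            (\<exists>C. \<forall>t>0. \<bar>(deriv ^^ k) Q t\<bar> \<le> C * (1 + t) powr (lam - real k)))"
proof -
  interpret E: damped_emden_fowler lam "real n * gam - real n + 2" "\<lambda>t. nu n gam lam t + h t"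
    "\<lambda>t. kappa n gam lam * (1 + t) powr (kappa n gam lam - 1) + h' t"
    by (rule damped_emden_fowler_nu_plus_h[OF assms(1-10)])
  have "Q = E.Q"
    unfolding Q_def E.Q_def by simp
  then show ?thesis
    using E.Q_log_bound E.Q_powr_bound E.higher_deriv_Q_bound by simp
qed

end
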